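(* Let $k\ge4$ be an integer and $\eta\in[\eta_{k+1},\eta_k)$. Then $\angle z_{k-1}z_kw_1,\ \angle z_kw_1w_2,\ \angle w_{k-1}w_kb_0,\ \angle w_kb_0z_0\in(0,\pi)$.
   Context: For $\eta\in(0,\pi/3)$ let $a=\frac{e^{-i\eta}}{2\cos\eta}$, $c=\frac{1}{1-|a|^4}$, and for integers $j\ge0$ put $z_j=ca^{j+1}$, $w_j=1-c|a|^2a^j$, $b_0=a+c|a|^4$. For $u,v,w\in\mathbb{C}$, $\angle uvw=\arg\frac{w-v}{u-v}$ with $\arg$ taking values in $[0,2\pi)$. For integers $k\ge1$ let $\Phi_k(\eta)=(1-|a|^4)\sin((k-1)\eta)-|a|^3\sin((k-2)\eta)+|a|^k\sin\eta$; for each $k\ge4$, $\Phi_k$ has a unique zero in $(\pi/k,\pi/(k-1))$, denoted $\eta_k$. *)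

theory Defs
  imports "HOL-Analysis.Analysis"
begin

definition aa :: "real \<Rightarrow> complex" where
  "aa \<eta> = cis (- \<eta>) / complex_of_real (2 * cos \<eta>)"

definition cc :: "real \<Rightarrow> real" where
  "cc \<eta> = 1 / (1 - cmod (aa \<eta>) ^ 4)"

definition zz :: "real \<Rightarrow> nat \<Rightarrow> complex" where
  "zz \<eta> j = complex_of_real (cc \<eta>) * aa \<eta> ^ (j + 1)"

definition ww :: "real \<Rightarrow> nat \<Rightarrow> complex" where
  "ww \<eta> j = 1 - complex_of_real (cc \<eta> * cmod (aa \<eta>) ^ 2) * aa \<eta> ^ j"

definition bb0 :: "real \<Rightarrow> complex" where
  "bb0 \<eta> = aa \<eta> + complex_of_real (cc \<eta> * cmod (aa \<eta>) ^ 4)"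

definition arg02pi :: "complex \<Rightarrow> real" where
  "arg02pi z = (if Arg z < 0 then Arg z + 2 * pi else Arg z)"

definition angle3 :: "complex \<Rightarrow> complex \<Rightarrow> complex \<Rightarrow> real" where
  "angle3 u v w = arg02pi ((w - v) / (u - v))"

definition Phi :: "nat \<Rightarrow> real \<Rightarrow> real" where
  "Phi k \<eta> = (1 - cmod (aa \<eta>) ^ 4) * sin ((real k - 1) * \<eta>)
     - cmod (aa \<eta>) ^ 3 * sin ((real k - 2) * \<eta>) + cmod (aa \<eta>) ^ k * sin \<eta>"

definition eta :: "nat \<Rightarrow> real" where
  "eta k = (THE x. pi / real k < x \<and> x < pi / (real k - 1) \<and> Phi k x = 0)"

end

(* The angle at v of the triangle u v w lies in (0, pi) iff Im ((w - v) conj (u - v)) > 0.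
   Since Re a = 1/2 we have 1 - a = conj a, and the similarity p |-> 1 - conj a * p maps
   z_j to w_j, w_1 to b_0 and w_2 to z_0, so the angles at w_k and b_0 equal those at z_k
   and w_1. With r = |a| = 1 / (2 cos eta) a direct computation gives
     Im ((w_1 - z_k) conj (z_(k-1) - z_k)) = c^2 r^(k+1) Phi_k(eta),
     Im ((w_2 - w_1) conj (z_k - w_1)) = c^2 r^7 (sin eta + r^(k-2) sin ((k+1) eta)),
   so it suffices to show Phi_k(eta) > 0 and r^(k-2) < sin eta.
   Phi_k is positive on [pi/(k+1), pi/k]. For k >= 5 it is strictly decreasing on
   [pi/k, pi/(k-1)] and negative at the right end, and Phi_4 = sin eta (1 - r^2)(1 - 2 r^4) / r^2;
   hence eta_k is well defined and Phi_k has no zero in [pi/(k+1), eta_k). The bound on sin eta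
   comes from r^2 <= 1/2 on (0, pi/4] when k >= 5, and from 2 r^4 < 1 when k = 4. *)

theory Submission
  imports Defs
begin

section \<open>Oriented angles\<close>

lemma angle3_in_0_pi_iff: "angle3 u v w \<in> {0<..<pi} \<longleftrightarrow> 0 < Im ((w - v) * cnj (u - v))"
proof -
  have "arg02pi z \<in> {0<..<pi} \<longleftrightarrow> 0 < Im z" for z
    using Arg_lt_pi[of z] Arg_bounded[of z] by (auto simp: arg02pi_def)
  then show ?thesis
    by (simp add: angle3_def Im_complex_div_gt_0)
qed

lemma angle3_affine:
  assumes "\<alpha> \<noteq> 0"
  shows "angle3 (\<alpha> * u + \<beta>) (\<alpha> * v + \<beta>) (\<alpha> * w + \<beta>) = angle3 u v w"
proof -
  have "(\<alpha> * w + \<beta> - (\<alpha> * v + \<beta>)) / (\<alpha> * u + \<beta> - (\<alpha> * v + \<beta>)) = (w - v) / (u - v)"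
    using assms by (simp add: right_diff_distrib[symmetric])
  then show ?thesis by (simp add: angle3_def)
qed

lemma Im_of_real_mult: "Im (of_real s * z) = s * Im z"
  by simp

lemma cos_ge_1_minus_sq_div_2:
  fixes x :: real
  assumes "0 \<le> x"
  shows "1 - x^2 / 2 \<le> cos x"
proof -
  let ?f = "\<lambda>t::real. cos t - 1 + t^2 / 2"
  have "?f 0 \<le> ?f x"
  proof (rule DERIV_nonneg_imp_nondecreasing[OF \<open>0 \<le> x\<close>])
    fix t :: real assume "0 \<le> t" "t \<le> x"
    have "(?f has_real_derivative (t - sin t)) (at t)"
      by (auto intro!: derivative_eq_intros)
    moreover have "0 \<le> t - sin t" using sin_x_le_x[OF \<open>0 \<le> t\<close>] by simp
    ultimately show "\<exists>y. (?f has_real_derivative y) (at t) \<and> 0 \<le> y" by blast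
  qed
  then show ?thesis by simp
qed

lemma sin_ge_x_minus_cube_div_6:
  fixes x :: real
  assumes "0 \<le> x"
  shows "x - x^3 / 6 \<le> sin x"
proof -
  let ?f = "\<lambda>t::real. sin t - t + t^3 / 6"
  have "?f 0 \<le> ?f x"
  proof (rule DERIV_nonneg_imp_nondecreasing[OF \<open>0 \<le> x\<close>])
    fix t :: real assume "0 \<le> t" "t \<le> x"
    have "(?f has_real_derivative (cos t - 1 + t^2 / 2)) (at t)"
      by (auto intro!: derivative_eq_intros simp: power2_eq_square)
    moreover have "0 \<le> cos t - 1 + t^2 / 2" using cos_ge_1_minus_sq_div_2[OF \<open>0 \<le> t\<close>] by simp
    ultimately show "\<exists>y. (?f has_real_derivative y) (at t) \<and> 0 \<le> y" by blast
  qed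
  then show ?thesis by simp
qed

lemma sin_ge_five_sixths_mult:
  fixes x :: real
  assumes "0 \<le> x" and "x \<le> 1"
  shows "5/6 * x \<le> sin x"
proof -
  have "x * x^2 \<le> x * 1" using assms by (intro mult_left_mono) (auto simp: power_le_one)
  then show ?thesis
    using sin_ge_x_minus_cube_div_6[OF assms(1)] by (simp add: power2_eq_square power3_eq_cube)
qed

lemma cos_ge_4_5:
  fixes x :: real
  assumes "0 \<le> x" and "x \<le> pi / 5"
  shows "4/5 \<le> cos x"
proof -
  have "x^2 \<le> (63/100)^2" using assms pi_approx by (intro power_mono) auto
  then show ?thesis using cos_ge_1_minus_sq_div_2[OF assms(1)] by (simp add: power2_eq_square)
qed

lemma cos_gt_half: "0 \<le> x \<Longrightarrow> x < pi / 3 \<Longrightarrow> 1/2 < cos x"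
  using cos_monotone_0_pi[of x "pi / 3"] by (simp add: cos_60)

lemma sin_triple: "sin (3 * x) = sin x * (4 * cos x ^ 2 - 1)" for x :: real
proof -
  have "sin (3 * x) = sin (2 * x + x)" by simp
  also have "\<dots> = sin x * (3 * cos x ^ 2 - sin x ^ 2)"
    unfolding sin_add sin_double cos_double by (simp add: algebra_simps power2_eq_square)
  finally show ?thesis
    by (simp add: sin_squared_eq algebra_simps)
qed

lemma pi_div_pred_le_pi_div_4: "5 \<le> k \<Longrightarrow> pi / (real k - 1) \<le> pi / 4"
  by (intro divide_left_mono) auto

lemma unique_zero_if_strict_decreasing:
  fixes f :: "real \<Rightarrow> real"
  assumes "a \<le> b" and "continuous_on {a..b} f" and "0 < f a" and "f b < 0"
    and "\<And>x y. a \<le> x \<Longrightarrow> x < y \<Longrightarrow> y \<le> b \<Longrightarrow> f y < f x"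
  shows "\<exists>!x. a < x \<and> x < b \<and> f x = 0"
proof -
  obtain x where "a \<le> x" "x \<le> b" "f x = 0"
    using IVT2'[of f b 0 a] assms(1-4) by auto
  then have "a < x \<and> x < b \<and> f x = 0"
    using assms(3,4) by (auto simp: order_le_less)
  moreover have "y = x" if "a < y \<and> y < b \<and> f y = 0" for y
    using assms(5)[of x y] assms(5)[of y x] that \<open>a < x \<and> x < b \<and> f x = 0\<close>
    by (cases x y rule: linorder_cases) auto
  ultimately show ?thesis by blast
qed

lemma square_le_pow2: "5 \<le> k \<Longrightarrow> (real k + 1)^2 \<le> 6 * 2 ^ (k - 2)"
proof (induction k rule: dec_induct)
  case base
  then show ?case by simp
next
  case (step k)
  have "5 * 5 \<le> real k * real k" using step.hyps by (intro mult_mono) auto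
  then have "(real (Suc k) + 1)^2 \<le> 2 * (real k + 1)^2"
    by (simp add: power2_eq_square algebra_simps)
  also have "\<dots> \<le> 2 * (6 * 2 ^ (k - 2))" using step.IH by simp
  also have "\<dots> = 6 * 2 ^ Suc (k - 2)" by simp
  also have "Suc (k - 2) = Suc k - 2" using step.hyps by simp
  finally show ?case .
qed

lemma cubic_lt:
  fixes s :: real
  assumes "1/3 < s" and "2 * s^2 < 1"
  shows "4 * s^3 < 4 * s - 1"
proof (cases "s \<le> 1/2")
  case True
  then have "s^2 \<le> (1/2)^2" using assms(1) by (intro power_mono) auto
  then have "s * (4 * s^2) \<le> s * 1" using assms(1) by (intro mult_left_mono) (auto simp: power_divide)
  moreover have "4 * s^3 = s * (4 * s^2)" by (simp add: power2_eq_square power3_eq_cube)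
  ultimately show ?thesis using assms(1) by linarith
next
  case False
  then have "s * (2 * s^2) < s * 1" using assms(2) by (intro mult_strict_left_mono) auto
  moreover have "4 * s^3 = 2 * (s * (2 * s^2))" by (simp add: power2_eq_square power3_eq_cube)
  ultimately show ?thesis using False by linarith
qed

section \<open>Reduction to Phi and sin\<close>

definition rho :: "real \<Rightarrow> real" where
  "rho \<eta> = 1 / (2 * cos \<eta>)"

lemma aa_polar: "aa \<eta> = of_real (rho \<eta>) * cis (- \<eta>)"
  by (simp add: aa_def rho_def)

lemma power_aa: "aa \<eta> ^ j = of_real (rho \<eta> ^ j) * cis (- (j * \<eta>))"
  by (simp add: aa_polar power_mult_distrib Complex.DeMoivre)

lemma cnj_power_aa: "cnj (aa \<eta>) ^ j = of_real (rho \<eta> ^ j) * cis (j * \<eta>)"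
  by (simp add: aa_polar power_mult_distrib Complex.DeMoivre cis_cnj)

lemma Im_power_aa: "Im (aa \<eta> ^ j) = - (rho \<eta> ^ j * sin (j * \<eta>))"
  by (simp add: power_aa)

lemma norm_aa: "0 < cos \<eta> \<Longrightarrow> cmod (aa \<eta>) = rho \<eta>"
  by (simp add: aa_def rho_def norm_divide)

lemma aa_mult_cnj: "aa \<eta> * cnj (aa \<eta>) = of_real (rho \<eta> ^ 2)"
  by (simp add: aa_polar cis_cnj cis_mult power2_eq_square)

lemma one_minus_aa: "0 < cos \<eta> \<Longrightarrow> 1 - aa \<eta> = cnj (aa \<eta>)"
  by (rule complex_eqI) (simp_all add: aa_polar rho_def)

lemma rho_pos: "0 < cos \<eta> \<Longrightarrow> 0 < rho \<eta>"
  by (simp add: rho_def)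

lemma aa_nonzero: "0 < cos \<eta> \<Longrightarrow> aa \<eta> \<noteq> 0"
  using rho_pos[of \<eta>] by (auto simp: aa_polar)

lemma rho_less_1: "1/2 < cos \<eta> \<Longrightarrow> rho \<eta> < 1"
  by (simp add: rho_def field_simps)

lemma cc_eq: "0 < cos \<eta> \<Longrightarrow> cc \<eta> = 1 / (1 - rho \<eta> ^ 4)"
  by (simp add: cc_def norm_aa)

lemma cc_mult: "1/2 < cos \<eta> \<Longrightarrow> cc \<eta> * (1 - rho \<eta> ^ 4) = 1"
  using rho_pos[of \<eta>] rho_less_1[of \<eta>] power_less_one_iff[of "rho \<eta>" 4]
  by (simp add: cc_eq)

lemma cc_pos: "1/2 < cos \<eta> \<Longrightarrow> 0 < cc \<eta>"
  using rho_pos[of \<eta>] rho_less_1[of \<eta>] power_less_one_iff[of "rho \<eta>" 4]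
  by (simp add: cc_eq)

lemma Phi_eq_rho: "0 < cos \<eta> \<Longrightarrow> Phi k \<eta>
    = (1 - rho \<eta> ^ 4) * sin ((real k - 1) * \<eta>) - rho \<eta> ^ 3 * sin ((real k - 2) * \<eta>) + rho \<eta> ^ k * sin \<eta>"
  by (simp add: Phi_def norm_aa)

lemma zz_to_ww:
  assumes "0 < cos \<eta>"
  shows "1 - cnj (aa \<eta>) * zz \<eta> j = ww \<eta> j"
proof -
  have "cnj (aa \<eta>) * zz \<eta> j = of_real (cc \<eta>) * (aa \<eta> * cnj (aa \<eta>)) * aa \<eta> ^ j"
    by (simp add: zz_def)
  then show ?thesis
    using assms by (simp add: ww_def aa_mult_cnj norm_aa)
qed

lemma ww1_to_bb0:
  assumes "0 < cos \<eta>"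
  shows "1 - cnj (aa \<eta>) * ww \<eta> 1 = bb0 \<eta>"
proof -
  have "1 - cnj (aa \<eta>) * ww \<eta> 1
      = (1 - cnj (aa \<eta>)) + of_real (cc \<eta> * rho \<eta> ^ 2) * (aa \<eta> * cnj (aa \<eta>))"
    using assms by (simp add: ww_def norm_aa algebra_simps)
  also have "\<dots> = aa \<eta> + of_real (cc \<eta> * rho \<eta> ^ 4)"
    using one_minus_aa[OF assms] by (simp add: aa_mult_cnj algebra_simps eval_nat_numeral)
  finally show ?thesis
    using assms by (simp add: bb0_def norm_aa)
qed

lemma ww2_to_zz0:
  assumes "1/2 < cos \<eta>"
  shows "1 - cnj (aa \<eta>) * ww \<eta> 2 = zz \<eta> 0"
proof -
  have cos: "0 < cos \<eta>" using assms by linarith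
  have "1 - cnj (aa \<eta>) * ww \<eta> 2
      = (1 - cnj (aa \<eta>)) + of_real (cc \<eta> * rho \<eta> ^ 2) * (aa \<eta> * cnj (aa \<eta>)) * aa \<eta>"
    using cos by (simp add: ww_def norm_aa algebra_simps power2_eq_square)
  also have "\<dots> = of_real (1 + cc \<eta> * rho \<eta> ^ 4) * aa \<eta>"
    using one_minus_aa[OF cos] by (simp add: aa_mult_cnj algebra_simps eval_nat_numeral)
  also have "1 + cc \<eta> * rho \<eta> ^ 4 = cc \<eta>"
    using cc_mult[OF assms] by (simp add: algebra_simps)
  finally show ?thesis
    by (simp add: zz_def)
qed

lemma angle_at_ww_eq_angle_at_zz:
  assumes "0 < cos \<eta>"
  shows "angle3 (ww \<eta> j) (ww \<eta> (Suc j)) (bb0 \<eta>) = angle3 (zz \<eta> j) (zz \<eta> (Suc j)) (ww \<eta> 1)"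
  using angle3_affine[of "- cnj (aa \<eta>)" "zz \<eta> j" 1 "zz \<eta> (Suc j)" "ww \<eta> 1"] aa_nonzero[OF assms]
  by (simp add: zz_to_ww[OF assms, symmetric] ww1_to_bb0[OF assms, symmetric])

lemma angle_at_bb0_eq_angle_at_ww1:
  assumes "1/2 < cos \<eta>"
  shows "angle3 (ww \<eta> k) (bb0 \<eta>) (zz \<eta> 0) = angle3 (zz \<eta> k) (ww \<eta> 1) (ww \<eta> 2)"
proof -
  have cos: "0 < cos \<eta>" using assms by linarith
  show ?thesis
    using angle3_affine[of "- cnj (aa \<eta>)" "zz \<eta> k" 1 "ww \<eta> 1" "ww \<eta> 2"] aa_nonzero[OF cos]
    by (simp add: zz_to_ww[OF cos, symmetric] ww1_to_bb0[OF cos, symmetric] ww2_to_zz0[OF assms, symmetric])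
qed

lemma Im_ww1_minus_zz_mult_cnj:
  assumes "1/2 < cos \<eta>"
  shows "Im ((ww \<eta> 1 - zz \<eta> (Suc n)) * cnj (aa \<eta> ^ n)) = cc \<eta> * rho \<eta> ^ n * Phi (Suc n) \<eta>"
proof -
  define r where "r = rho \<eta>"
  define c where "c = cc \<eta>"
  have cos: "0 < cos \<eta>" using assms by linarith
  have "(ww \<eta> 1 - zz \<eta> (Suc n)) * cnj (aa \<eta> ^ n)
      = cnj (aa \<eta>) ^ n - of_real (c * r^2) * (aa \<eta> ^ 1 * cnj (aa \<eta>) ^ n)
        - of_real c * (aa \<eta> ^ (n + 2) * cnj (aa \<eta>) ^ n)"
    using cos by (simp add: ww_def zz_def norm_aa r_def c_def algebra_simps)
  also have "\<dots> = of_real (r ^ n) * cis (n * \<eta>) - of_real (c * r^2 * r ^ (n + 1)) * cis ((real n - 1) * \<eta>)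
        - of_real (c * r ^ (n + n + 2)) * cis (- (2 * \<eta>))"
    unfolding power_aa cnj_power_aa r_def[symmetric]
    by (simp add: cis_mult algebra_simps power_add mult_2)
  finally have "Im ((ww \<eta> 1 - zz \<eta> (Suc n)) * cnj (aa \<eta> ^ n))
      = r ^ n * sin (n * \<eta>) - c * r^2 * r ^ (n + 1) * sin ((real n - 1) * \<eta>) + c * r ^ (n + n + 2) * sin (2 * \<eta>)"
    by simp
  also have "sin (2 * \<eta>) = sin \<eta> / r"
    using cos by (simp add: sin_double r_def rho_def)
  also have "r ^ n * sin (n * \<eta>) - c * r^2 * r ^ (n + 1) * sin ((real n - 1) * \<eta>) + c * r ^ (n + n + 2) * (sin \<eta> / r)
      = c * r ^ n * ((1 - r ^ 4) * sin (n * \<eta>) - r ^ 3 * sin ((real n - 1) * \<eta>) + r ^ (Suc n) * sin \<eta>)"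
  proof -
    have "c * r ^ n * ((1 - r ^ 4) * sin (n * \<eta>) - r ^ 3 * sin ((real n - 1) * \<eta>) + r ^ (Suc n) * sin \<eta>)
        = (c * (1 - r ^ 4)) * r ^ n * sin (n * \<eta>) - c * r^2 * r ^ (n + 1) * sin ((real n - 1) * \<eta>)
          + c * r ^ (n + n + 2) * (sin \<eta> / r)"
      using rho_pos[OF cos] by (simp add: r_def field_simps power_add eval_nat_numeral)
    then show ?thesis
      using cc_mult[OF assms] by (simp add: r_def c_def)
  qed
  finally show ?thesis
    using cos by (simp add: Phi_eq_rho r_def c_def)
qed

lemma angle_at_zz_iff:
  assumes "1/2 < cos \<eta>"
  shows "angle3 (zz \<eta> n) (zz \<eta> (Suc n)) (ww \<eta> 1) \<in> {0<..<pi} \<longleftrightarrow> 0 < Phi (Suc n) \<eta>"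
proof -
  have cos: "0 < cos \<eta>" using assms by linarith
  have "zz \<eta> n - zz \<eta> (Suc n) = of_real (cc \<eta>) * (aa \<eta> * (1 - aa \<eta>)) * aa \<eta> ^ n"
    by (simp add: zz_def algebra_simps)
  also have "\<dots> = of_real (cc \<eta> * rho \<eta> ^ 2) * aa \<eta> ^ n"
    by (simp add: one_minus_aa[OF cos] aa_mult_cnj)
  finally have "Im ((ww \<eta> 1 - zz \<eta> (Suc n)) * cnj (zz \<eta> n - zz \<eta> (Suc n)))
      = cc \<eta> * rho \<eta> ^ 2 * Im ((ww \<eta> 1 - zz \<eta> (Suc n)) * cnj (aa \<eta> ^ n))"
    by (simp add: algebra_simps)
  also have "\<dots> = cc \<eta> ^ 2 * rho \<eta> ^ (n + 2) * Phi (Suc n) \<eta>"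
    unfolding Im_ww1_minus_zz_mult_cnj[OF assms] by (simp add: power_add power2_eq_square)
  finally have Im_eq: "Im ((ww \<eta> 1 - zz \<eta> (Suc n)) * cnj (zz \<eta> n - zz \<eta> (Suc n)))
      = cc \<eta> ^ 2 * rho \<eta> ^ (n + 2) * Phi (Suc n) \<eta>" .
  show ?thesis
    unfolding angle3_in_0_pi_iff Im_eq using cc_pos[OF assms] rho_pos[OF cos]
    by (simp add: mult_less_cancel_left_pos[of _ 0, simplified])
qed

lemma Im_ww1_minus_zz:
  assumes "0 < cos \<eta>"
  shows "Im (ww \<eta> 1 - zz \<eta> k) = cc \<eta> * (rho \<eta> ^ 3 * sin \<eta> + rho \<eta> ^ (k + 1) * sin ((real k + 1) * \<eta>))"
proof -
  have "ww \<eta> 1 - zz \<eta> k = 1 - of_real (cc \<eta> * rho \<eta> ^ 2) * aa \<eta> ^ 1 - of_real (cc \<eta>) * aa \<eta> ^ (k + 1)"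
    using assms by (simp add: ww_def zz_def norm_aa)
  then have "Im (ww \<eta> 1 - zz \<eta> k) = 0 - cc \<eta> * rho \<eta> ^ 2 * Im (aa \<eta> ^ 1) - cc \<eta> * Im (aa \<eta> ^ (k + 1))"
    by (simp only: minus_complex.sel one_complex.sel Im_of_real_mult)
  then show ?thesis
    by (simp only: Im_power_aa) (simp add: algebra_simps eval_nat_numeral)
qed

lemma angle_at_ww1_iff:
  assumes "1/2 < cos \<eta>" and "2 \<le> k"
  shows "angle3 (zz \<eta> k) (ww \<eta> 1) (ww \<eta> 2) \<in> {0<..<pi}
    \<longleftrightarrow> 0 < sin \<eta> + rho \<eta> ^ (k - 2) * sin ((real k + 1) * \<eta>)"
proof -
  have cos: "0 < cos \<eta>" using assms by linarith
  have "ww \<eta> 2 - ww \<eta> 1 = of_real (cc \<eta> * rho \<eta> ^ 2) * (aa \<eta> * (1 - aa \<eta>))"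
    using cos by (simp add: ww_def norm_aa algebra_simps power2_eq_square)
  also have "\<dots> = of_real (cc \<eta> * rho \<eta> ^ 4)"
    by (simp add: one_minus_aa[OF cos] aa_mult_cnj eval_nat_numeral)
  finally have "Im ((ww \<eta> 2 - ww \<eta> 1) * cnj (zz \<eta> k - ww \<eta> 1))
      = cc \<eta> * rho \<eta> ^ 4 * Im (ww \<eta> 1 - zz \<eta> k)"
    by simp
  also have "\<dots> = cc \<eta> ^ 2 * rho \<eta> ^ 7 * (sin \<eta> + rho \<eta> ^ (k - 2) * sin ((real k + 1) * \<eta>))"
  proof -
    have "rho \<eta> ^ (k + 1) = rho \<eta> ^ 3 * rho \<eta> ^ (k - 2)"
      using assms(2) by (simp flip: power_add)
    then show ?thesis
      unfolding Im_ww1_minus_zz[OF cos] by (simp only:) (simp add: algebra_simps power2_eq_square flip: power_add)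
  qed
  finally have Im_eq: "Im ((ww \<eta> 2 - ww \<eta> 1) * cnj (zz \<eta> k - ww \<eta> 1))
      = cc \<eta> ^ 2 * rho \<eta> ^ 7 * (sin \<eta> + rho \<eta> ^ (k - 2) * sin ((real k + 1) * \<eta>))" .
  show ?thesis
    unfolding angle3_in_0_pi_iff Im_eq using cc_pos[OF assms(1)] rho_pos[OF cos]
    by (simp add: mult_less_cancel_left_pos[of _ 0, simplified])
qed

section \<open>The zeros of Phi\<close>

lemma small_angle_bounds:
  assumes "0 < x" and "x \<le> pi / 4"
  shows "0 < cos x" "0 < sin x" "sin x ^ 2 \<le> 1/2"
    "0 < rho x" "rho x ^ 2 \<le> 1/2" "rho x \<le> 71/100" "rho x ^ 3 \<le> 71/200" "rho x ^ 4 \<le> 1/4"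
proof -
  have "sqrt 2 / 2 \<le> cos x"
    using cos_monotone_0_pi_le[of x "pi / 4"] assms by (simp add: cos_45)
  then have "(sqrt 2 / 2)^2 \<le> cos x ^ 2" by (intro power_mono) auto
  then have cos2: "1/2 \<le> cos x ^ 2" by (simp add: power_divide)
  show cos: "0 < cos x" using assms pi_gt_zero by (intro cos_gt_zero; linarith)
  show "0 < sin x" using assms by (intro sin_gt_zero) auto
  show "sin x ^ 2 \<le> 1/2" using cos2 sin_cos_squared_add[of x] by linarith
  show pos: "0 < rho x" using rho_pos[OF cos] .
  show sq: "rho x ^ 2 \<le> 1/2" using cos2 cos by (simp add: rho_def power_divide field_simps)
  show le: "rho x \<le> 71/100"
  proof (rule ccontr)
    assume "\<not> rho x \<le> 71/100"
    then have "(71/100)^2 < rho x ^ 2" by (intro power_strict_mono) auto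
    then show False using sq by (simp add: power2_eq_square)
  qed
  have "rho x ^ 3 = rho x * rho x ^ 2" by (simp add: eval_nat_numeral)
  also have "\<dots> \<le> (71/100) * (1/2)" using le sq pos by (intro mult_mono) auto
  finally show "rho x ^ 3 \<le> 71/200" by simp
  have "rho x ^ 4 = (rho x ^ 2)^2" by simp
  also have "\<dots> \<le> (1/2)^2" using sq pos by (intro power_mono) auto
  finally show "rho x ^ 4 \<le> 1/4" by (simp add: power2_eq_square)
qed

lemma rho_has_real_derivative:
  "cos x \<noteq> 0 \<Longrightarrow> (rho has_real_derivative 2 * rho x ^ 2 * sin x) (at x)"
  unfolding rho_def[abs_def]
  by (auto intro!: derivative_eq_intros simp: field_simps power2_eq_square)

definition Phi_deriv :: "nat \<Rightarrow> real \<Rightarrow> real" where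
  "Phi_deriv k x = - (4 * rho x ^ 3 * (2 * rho x ^ 2 * sin x)) * sin ((real k - 1) * x)
     + (1 - rho x ^ 4) * ((real k - 1) * cos ((real k - 1) * x))
     - 3 * rho x ^ 2 * (2 * rho x ^ 2 * sin x) * sin ((real k - 2) * x)
     - rho x ^ 3 * ((real k - 2) * cos ((real k - 2) * x))
     + real k * rho x ^ (k - 1) * (2 * rho x ^ 2 * sin x) * sin x + rho x ^ k * cos x"

lemma Phi_rho_has_real_derivative:
  "cos x \<noteq> 0 \<Longrightarrow> ((\<lambda>x. (1 - rho x ^ 4) * sin ((real k - 1) * x) - rho x ^ 3 * sin ((real k - 2) * x)
    + rho x ^ k * sin x) has_real_derivative Phi_deriv k x) (at x)"
  unfolding Phi_deriv_def
  by (rule derivative_eq_intros rho_has_real_derivative refl | assumption | simp)+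
    (simp add: algebra_simps eval_nat_numeral)

lemma Phi_has_real_derivative:
  assumes "0 < cos x"
  shows "(Phi k has_real_derivative Phi_deriv k x) (at x)"
proof (rule has_field_derivative_transform_within_open)
  show "open {x::real. 0 < cos x}"
    by (rule open_Collect_less[of "\<lambda>_. 0" "\<lambda>x. cos x"]) (intro continuous_intros)+
qed (use assms Phi_rho_has_real_derivative[of x k] in \<open>auto simp: Phi_eq_rho\<close>)

lemma continuous_on_Phi:
  assumes "0 \<le> a" and "b < pi / 2"
  shows "continuous_on {a..b} (Phi k)"
proof (intro continuous_at_imp_continuous_on ballI)
  fix x assume "x \<in> {a..b}"
  then have "0 < cos x" using assms pi_gt_zero by (intro cos_gt_zero_pi) auto
  then show "isCont (Phi k) x" using DERIV_isCont Phi_has_real_derivative by blast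
qed

lemma Phi_pos_between_pi_divs:
  assumes "4 \<le> k" and "pi / (real k + 1) \<le> x" and "x \<le> pi / real k"
  shows "0 < Phi k x"
proof -
  have k: "4 \<le> real k" using assms(1) by simp
  have "0 < pi / (real k + 1)" by simp
  moreover have "pi / real k \<le> pi / 4" using k by (intro divide_left_mono) auto
  ultimately have "0 < x" "x \<le> pi / 4" using assms(2,3) by linarith+
  note b = small_angle_bounds[OF this]
  define r where "r = rho x"
  \<comment> \<open>With t = pi - (k - 1) x in [x, pi/2], Phi_k x >= (1 - r^4 - r^2/2 - r^3) sin x.\<close>
  define t where "t = pi - (real k - 1) * x"
  have "real k * x \<le> pi" "pi \<le> (real k + 1) * x"
    using assms(2,3) k by (simp_all add: field_simps)
  then have "x \<le> t" "t \<le> pi / 2"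
    using \<open>x \<le> pi / 4\<close> unfolding t_def by (simp_all add: algebra_simps)
  have sin1: "sin ((real k - 1) * x) = sin t"
    unfolding t_def by (metis sin_pi_minus diff_diff_cancel)
  have "(real k - 2) * x = pi - (t + x)" unfolding t_def by (simp add: algebra_simps)
  then have sin2: "sin ((real k - 2) * x) = sin t * cos x + cos t * sin x" by (simp add: sin_add)
  have "sin x \<le> sin t"
    using \<open>x \<le> t\<close> \<open>t \<le> pi / 2\<close> \<open>0 < x\<close> by (intro sin_monotone_2pi_le) auto
  have "r^3 * cos x = r^2 / 2"
    using b unfolding r_def rho_def by (simp add: field_simps eval_nat_numeral)
  have "Phi k x = (1 - r^4) * sin t - r^3 * (sin t * cos x + cos t * sin x) + r^k * sin x"
    using b by (simp add: Phi_eq_rho sin1 sin2 r_def)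
  also have "\<dots> = (1 - r^4 - r^2/2) * sin t - r^3 * cos t * sin x + r^k * sin x"
    using \<open>r^3 * cos x = r^2 / 2\<close> by (simp add: algebra_simps)
  also have "\<dots> \<ge> (1 - r^4 - r^2/2 - r^3) * sin x"
  proof -
    have "(1 - r^4 - r^2/2) * sin x \<le> (1 - r^4 - r^2/2) * sin t"
      using \<open>sin x \<le> sin t\<close> b unfolding r_def by (intro mult_left_mono) auto
    moreover have "r^3 * cos t * sin x \<le> r^3 * sin x"
      using b unfolding r_def by (simp add: mult_left_le)
    moreover have "0 \<le> r^k * sin x" using b unfolding r_def by simp
    moreover have "(1 - r^4 - r^2/2 - r^3) * sin x = (1 - r^4 - r^2/2) * sin x - r^3 * sin x"
      by (simp add: algebra_simps)
    ultimately show ?thesis by linarith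
  qed
  finally have "(1 - r^4 - r^2/2 - r^3) * sin x \<le> Phi k x" .
  moreover have "0 < (1 - r^4 - r^2/2 - r^3) * sin x" using b unfolding r_def by simp
  ultimately show ?thesis by linarith
qed

lemma cos_pred_mult_le:
  assumes "5 \<le> k" and "pi / real k \<le> x" and "x \<le> pi / (real k - 1)"
  shows "cos ((real k - 1) * x) \<le> - 4/5"
proof -
  have k: "5 \<le> real k" using assms(1) by simp
  define t where "t = pi - (real k - 1) * x"
  have "(real k - 1) * (pi / real k) \<le> (real k - 1) * x"
    using assms(2) k by (intro mult_left_mono) auto
  moreover have "pi - (real k - 1) * (pi / real k) = pi / real k" using k by (simp add: field_simps)
  moreover have "pi / real k \<le> pi / 5" using k by (intro divide_left_mono) auto
  moreover have "(real k - 1) * x \<le> pi" using assms(3) k by (simp add: field_simps)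
  ultimately have "0 \<le> t" "t \<le> pi / 5" unfolding t_def by linarith+
  then have "4/5 \<le> cos t" by (rule cos_ge_4_5)
  then show ?thesis unfolding t_def by simp
qed

lemma rho_pow_sin_sq_le:
  assumes "5 \<le> k" and "0 < x" and "x \<le> pi / 4"
  shows "rho x ^ (k - 1) * rho x ^ 2 * sin x ^ 2 \<le> 1/16"
proof -
  note b = small_angle_bounds[OF assms(2,3)]
  have "rho x ^ (k - 1) * rho x ^ 2 = rho x ^ (k + 1)" using assms(1) by (simp flip: power_add)
  also have "\<dots> \<le> rho x ^ 6" using b assms(1) by (intro power_decreasing) auto
  also have "\<dots> = (rho x ^ 2)^3" by simp
  also have "\<dots> \<le> (1/2)^3" using b by (intro power_mono) auto
  finally have "rho x ^ (k - 1) * rho x ^ 2 \<le> 1/8" by (simp add: power_divide)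
  then show ?thesis
    using b mult_mono[of "rho x ^ (k - 1) * rho x ^ 2" "1/8" "sin x ^ 2" "1/2"] by simp
qed

lemma Phi_deriv_neg:
  assumes "5 \<le> k" and "pi / real k \<le> x" and "x \<le> pi / (real k - 1)"
  shows "Phi_deriv k x < 0"
proof -
  have k: "5 \<le> real k" using assms(1) by simp
  have "0 < pi / real k" using k by simp
  then have "0 < x" "x \<le> pi / 4" using assms(2,3) pi_div_pred_le_pi_div_4[OF assms(1)] by linarith+
  note b = small_angle_bounds[OF this]
  define r where "r = rho x"
  have "(real k - 1) * x \<le> pi" using assms(3) k by (simp add: field_simps)
  moreover have "(real k - 2) * x \<le> (real k - 1) * x" using \<open>0 < x\<close> by (intro mult_right_mono) auto
  ultimately have "(real k - 2) * x \<le> pi" by linarith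
  have sin1: "0 \<le> sin ((real k - 1) * x)"
    using \<open>(real k - 1) * x \<le> pi\<close> \<open>0 < x\<close> k by (intro sin_ge_zero) auto
  have sin2: "0 \<le> sin ((real k - 2) * x)"
    using \<open>(real k - 2) * x \<le> pi\<close> \<open>0 < x\<close> k by (intro sin_ge_zero) auto
  have T1: "- (4 * r^3 * (2 * r^2 * sin x)) * sin ((real k - 1) * x) \<le> 0"
    using b sin1 unfolding r_def by simp
  have T2: "(1 - r^4) * ((real k - 1) * cos ((real k - 1) * x)) \<le> - (3/5) * (real k - 1)"
  proof -
    have "(1 - r^4) * cos ((real k - 1) * x) \<le> (1 - r^4) * (- 4/5)"
      using cos_pred_mult_le[OF assms] b unfolding r_def by (intro mult_left_mono) auto
    also have "\<dots> \<le> - 3/5" using b unfolding r_def by simp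
    finally have "(real k - 1) * ((1 - r^4) * cos ((real k - 1) * x)) \<le> (real k - 1) * (- 3/5)"
      using k by (intro mult_left_mono) auto
    then show ?thesis by (simp add: algebra_simps)
  qed
  have T3: "0 \<le> 3 * r^2 * (2 * r^2 * sin x) * sin ((real k - 2) * x)"
    using b sin2 unfolding r_def by simp
  have T4: "- (r^3 * ((real k - 2) * cos ((real k - 2) * x))) \<le> 71/200 * (real k - 2)"
  proof -
    have "- (r^3 * ((real k - 2) * cos ((real k - 2) * x)))
        = (r^3 * (real k - 2)) * (- cos ((real k - 2) * x))" by simp
    also have "\<dots> \<le> r^3 * (real k - 2)" using b k unfolding r_def by (intro mult_left_le) auto
    also have "\<dots> \<le> 71/200 * (real k - 2)" using b k unfolding r_def by (intro mult_right_mono) auto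
    finally show ?thesis .
  qed
  have "real k * (r^(k - 1) * r^2 * sin x ^ 2) \<le> real k * (1/16)"
    using rho_pow_sin_sq_le[OF assms(1) \<open>0 < x\<close> \<open>x \<le> pi / 4\<close>] k unfolding r_def
    by (intro mult_left_mono) auto
  then have T5: "real k * r^(k - 1) * (2 * r^2 * sin x) * sin x \<le> real k / 8"
    by (simp add: power2_eq_square algebra_simps)
  have "r^(k - 1) \<le> r^4" using b assms(1) unfolding r_def by (intro power_decreasing) auto
  then have T6: "r^(k - 1) \<le> 1/4" using b unfolding r_def by linarith
  have "r^k = r^(k - 1) * r" using assms(1) by (simp flip: power_Suc2)
  then have T7: "r^k * cos x = r^(k - 1) / 2" using b unfolding r_def rho_def by simp
  \<comment> \<open>Summing up: -(3/5) (k - 1) + (71/200) (k - 2) + k/8 + 1/8 < 0 for k \<ge> 5.\<close>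
  show ?thesis
    unfolding Phi_deriv_def r_def[symmetric] using T1 T2 T3 T4 T5 T6 T7 k by argo
qed

lemma Phi_strict_decreasing:
  assumes "5 \<le> k" and "pi / real k \<le> x" and "x < y" and "y \<le> pi / (real k - 1)"
  shows "Phi k y < Phi k x"
proof (rule DERIV_neg_imp_decreasing[OF \<open>x < y\<close>])
  fix t assume t: "x \<le> t" "t \<le> y"
  have "0 < pi / real k" "pi / (real k - 1) \<le> pi / 4"
    using assms(1) pi_div_pred_le_pi_div_4 by auto
  then have "0 < cos t" using assms t pi_gt_zero by (intro cos_gt_zero_pi; linarith)
  moreover have "Phi_deriv k t < 0" using Phi_deriv_neg assms t by simp
  ultimately show "\<exists>D. (Phi k has_real_derivative D) (at t) \<and> D < 0"
    using Phi_has_real_derivative by blast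
qed

lemma Phi_neg_at_pi_div:
  assumes "5 \<le> k"
  shows "Phi k (pi / (real k - 1)) < 0"
proof -
  define x where "x = pi / (real k - 1)"
  have k: "5 \<le> real k" using assms by simp
  have "0 < x" "x \<le> pi / 4" unfolding x_def using k pi_div_pred_le_pi_div_4[OF assms] by auto
  note b = small_angle_bounds[OF this]
  have "(real k - 1) * x = pi" "(real k - 2) * x = pi - x"
    unfolding x_def using k by (simp_all add: field_simps)
  moreover have "rho x ^ k < rho x ^ 3"
    using b assms by (intro power_strict_decreasing) auto
  ultimately show ?thesis
    using b unfolding x_def[symmetric] by (simp add: Phi_eq_rho)
qed

lemma Phi_4_eq:
  assumes "0 < cos x"
  shows "Phi 4 x = sin x * (1 - rho x ^ 2) * (1 - 2 * rho x ^ 4) / rho x ^ 2"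
proof -
  define r where "r = rho x"
  have "Phi 4 x = (1 - r^4) * sin (3 * x) - r^3 * sin (2 * x) + r^4 * sin x"
    using Phi_eq_rho[OF assms, of 4] by (simp add: r_def)
  also have "\<dots> = (1 - r^4) * (sin x * (4 * cos x ^ 2 - 1)) - r^3 * (2 * sin x * cos x) + r^4 * sin x"
    by (simp only: sin_triple sin_double)
  also have "cos x = 1 / (2 * r)" using assms by (simp add: r_def rho_def)
  also have "r \<noteq> 0" using rho_pos[OF assms] by (simp add: r_def)
  then have "(1 - r^4) * (sin x * (4 * (1 / (2 * r)) ^ 2 - 1)) - r^3 * (2 * sin x * (1 / (2 * r))) + r^4 * sin x
      = sin x * (1 - r^2) * (1 - 2 * r^4) / r^2"
    by (simp add: field_simps) (simp add: algebra_simps eval_nat_numeral)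
  finally show ?thesis by (simp add: r_def)
qed

lemma Phi_4_unique_zero: "\<exists>!x. pi / 4 < x \<and> x < pi / 3 \<and> Phi 4 x = 0"
proof -
  let ?f = "\<lambda>x. 1 - 2 * rho x ^ 4"
  have cos: "1/2 \<le> cos x" if "pi / 4 \<le> x" "x \<le> pi / 3" for x
    using cos_monotone_0_pi_le[of x "pi / 3"] that pi_gt_zero by (simp add: cos_60)
  have "\<exists>!x. pi / 4 < x \<and> x < pi / 3 \<and> ?f x = 0"
  proof (rule unique_zero_if_strict_decreasing)
    show "continuous_on {pi / 4..pi / 3} ?f"
      unfolding rho_def using cos by (intro continuous_intros) force
    have "sqrt 2 ^ 4 = (4::real)" using power_mult[of "sqrt (2::real)" 2 2] by simp
    then show "0 < ?f (pi / 4)"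
      by (simp add: rho_def cos_45 power_divide)
    show "?f (pi / 3) < 0"
      by (simp add: rho_def cos_60)
    show "?f y < ?f x" if "pi / 4 \<le> x" "x < y" "y \<le> pi / 3" for x y
    proof -
      have "cos y < cos x" using that pi_gt_zero by (intro cos_monotone_0_pi) auto
      moreover have "1/2 \<le> cos y" using cos that by simp
      ultimately have "rho x < rho y" by (simp add: rho_def field_simps)
      moreover have "0 < rho x" using rho_pos cos[of x] that by simp
      ultimately have "rho x ^ 4 < rho y ^ 4" by (intro power_strict_mono) auto
      then show ?thesis by simp
    qed
  qed simp
  moreover have "Phi 4 x = 0 \<longleftrightarrow> ?f x = 0" if "pi / 4 < x" "x < pi / 3" for x
  proof -
    have c: "1/2 < cos x" using cos_gt_half that pi_gt_zero by simp
    have "0 < sin x" using that pi_gt_zero by (intro sin_gt_zero) auto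
    moreover have "0 < rho x" "rho x < 1" using rho_pos rho_less_1 c by auto
    moreover from this have "rho x ^ 2 < 1" by (simp add: power_less_one_iff)
    ultimately show ?thesis using c by (simp add: Phi_4_eq)
  qed
  ultimately show ?thesis by blast
qed

lemma Phi_unique_zero:
  assumes "4 \<le> k"
  shows "\<exists>!x. pi / real k < x \<and> x < pi / (real k - 1) \<and> Phi k x = 0"
proof (cases "k = 4")
  case True
  then show ?thesis using Phi_4_unique_zero by simp
next
  case False
  then have k: "5 \<le> k" using assms by simp
  show ?thesis
  proof (rule unique_zero_if_strict_decreasing)
    show "pi / real k \<le> pi / (real k - 1)" using k by (intro divide_left_mono) auto
    have "pi / (real k - 1) < pi / 2" using pi_div_pred_le_pi_div_4[OF k] pi_gt_zero by linarith
    then show "continuous_on {pi / real k..pi / (real k - 1)} (Phi k)"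
      by (intro continuous_on_Phi) auto
    show "0 < Phi k (pi / real k)"
      using assms by (intro Phi_pos_between_pi_divs) (auto intro: divide_left_mono)
  qed (use k Phi_neg_at_pi_div Phi_strict_decreasing in auto)
qed

lemma eta_spec:
  assumes "4 \<le> k"
  shows "pi / real k < eta k" and "eta k < pi / (real k - 1)" and "Phi k (eta k) = 0"
  using theI'[OF Phi_unique_zero[OF assms]] unfolding eta_def[symmetric] by auto

lemma eta_lt_pi_div_3:
  assumes "4 \<le> k"
  shows "eta k < pi / 3"
proof -
  have "pi / (real k - 1) \<le> pi / 3" using assms by (intro divide_left_mono) auto
  then show ?thesis using eta_spec(2)[OF assms] by linarith
qed

lemma Phi_pos_before_eta:
  assumes "4 \<le> k" and "pi / (real k + 1) \<le> x" and "x < eta k"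
  shows "0 < Phi k x"
proof (cases "x \<le> pi / real k")
  case True
  then show ?thesis using Phi_pos_between_pi_divs assms(1,2) by blast
next
  case False
  have pos: "0 < Phi k (pi / real k)"
    using assms(1) by (intro Phi_pos_between_pi_divs) (auto intro: divide_left_mono)
  show ?thesis
  proof (rule ccontr)
    assume "\<not> 0 < Phi k x"
    moreover have "x < pi / 2" using assms(3) eta_lt_pi_div_3[OF assms(1)] pi_gt_zero by linarith
    then have "continuous_on {pi / real k..x} (Phi k)" by (intro continuous_on_Phi) auto
    ultimately obtain z where z: "pi / real k \<le> z" "z \<le> x" "Phi k z = 0"
      using IVT2'[of "Phi k" x 0 "pi / real k"] pos False by auto
    then have "pi / real k < z" using pos by (auto simp: order_le_less)
    moreover have "z < pi / (real k - 1)" using z assms(3) eta_spec(2)[OF assms(1)] by linarith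
    ultimately have "z = eta k"
      using Phi_unique_zero[OF assms(1)] eta_spec[OF assms(1)] z(3) by blast
    then show False using z(2) assms(3) by simp
  qed
qed

lemma between_etas:
  assumes "4 \<le> k" and "eta (k + 1) \<le> \<eta>" and "\<eta> < eta k"
  shows "pi / (real k + 1) < \<eta>" and "\<eta> < pi / (real k - 1)" and "0 < \<eta>" and "\<eta> < pi / 3"
proof -
  show lower: "pi / (real k + 1) < \<eta>"
    using eta_spec(1)[of "k + 1"] assms(1,2) by (simp add: add.commute)
  show "\<eta> < pi / (real k - 1)" using eta_spec(2)[OF assms(1)] assms(3) by simp
  show "\<eta> < pi / 3" using eta_lt_pi_div_3[OF assms(1)] assms(3) by simp
  have "0 < pi / (real k + 1)" by simp
  then show "0 < \<eta>" using lower by linarith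
qed

section \<open>Lower bounds for sin\<close>

lemma rho_pow_lt_sin:
  assumes "5 \<le> k" and "pi / (real k + 1) < x" and "x \<le> pi / 4"
  shows "rho x ^ (k - 2) < sin x"
proof -
  have k: "5 \<le> real k" using assms(1) by simp
  have "0 < pi / (real k + 1)" by simp
  then have "0 < x" using assms(2) by linarith
  note b = small_angle_bounds[OF this assms(3)]
  \<comment> \<open>Compare squares: (k + 1)^2 rho^(2 (k - 2)) \<le> 6 < (k + 1)^2 sin^2 x.\<close>
  have "x < 1" using assms(3) pi_less_4 by simp
  then have "5/6 * x * (real k + 1) \<le> sin x * (real k + 1)"
    using sin_ge_five_sixths_mult[of x] \<open>0 < x\<close> k by (intro mult_right_mono) auto
  moreover have "3 < x * (real k + 1)" using assms(2) k pi_gt3 by (simp add: field_simps)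
  ultimately have "5/2 < sin x * (real k + 1)" by linarith
  then have "(5/2)^2 < (sin x * (real k + 1))^2" by (intro power_strict_mono) auto
  then have "6 < sin x ^ 2 * (real k + 1)^2" by (simp add: power_mult_distrib power_divide)
  have "(rho x ^ (k - 2))^2 = (rho x ^ 2) ^ (k - 2)" by (simp flip: power_mult add: mult.commute)
  also have "\<dots> \<le> (1/2) ^ (k - 2)" using b by (intro power_mono) auto
  finally have "(rho x ^ (k - 2))^2 * (real k + 1)^2 \<le> (1/2) ^ (k - 2) * (6 * 2 ^ (k - 2))"
    using square_le_pow2[OF assms(1)] by (intro mult_mono) auto
  also have "\<dots> = 6" by (simp add: power_one_over)
  finally have "(rho x ^ (k - 2))^2 * (real k + 1)^2 < sin x ^ 2 * (real k + 1)^2"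
    using \<open>6 < sin x ^ 2 * (real k + 1)^2\<close> by linarith
  then have "(rho x ^ (k - 2))^2 < sin x ^ 2"
    using k by (simp add: mult_less_cancel_right)
  then show ?thesis
    using power_less_imp_less_base[of "rho x ^ (k - 2)" 2 "sin x"] b by simp
qed

lemma rho_sq_lt_sin:
  assumes "pi / 6 < x" and "x < pi / 3" and "0 < Phi 4 x"
  shows "rho x ^ 2 < sin x"
proof -
  define s where "s = rho x ^ 2"
  have "0 < x" using assms(1) pi_gt_zero by linarith
  then have cos: "1/2 < cos x" using cos_gt_half assms(2) by simp
  have "0 < sin x" using \<open>0 < x\<close> assms(2) pi_gt_zero by (intro sin_gt_zero) auto
  have "0 < rho x" "rho x < 1" using rho_pos rho_less_1 cos by auto
  then have "0 < s" "s < 1" unfolding s_def by (auto simp: power_less_one_iff)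
  have "0 < sin x * (1 - s) * (1 - 2 * s^2) / s"
    using assms(3) cos by (simp add: Phi_4_eq s_def flip: power_mult)
  moreover have "0 < sin x * (1 - s)" using \<open>0 < sin x\<close> \<open>s < 1\<close> by simp
  ultimately have "2 * s^2 < 1"
    using \<open>0 < s\<close> by (auto simp: zero_less_divide_iff zero_less_mult_iff)
  have "cos x < sqrt 3 / 2"
    using cos_monotone_0_pi[of "pi / 6" x] assms(1,2) pi_gt_zero by (simp add: cos_30)
  then have "cos x ^ 2 < (sqrt 3 / 2)^2" using cos by (intro power_strict_mono) auto
  then have "1/3 < s" using cos unfolding s_def rho_def by (simp add: power_divide field_simps)
  have "sin x ^ 2 = 1 - 1 / (4 * s)"
    using cos unfolding s_def rho_def by (simp add: sin_squared_eq power_divide field_simps)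
  moreover have "s^2 < 1 - 1 / (4 * s)"
    using cubic_lt[OF \<open>1/3 < s\<close> \<open>2 * s^2 < 1\<close>] \<open>0 < s\<close>
    by (simp add: field_simps power2_eq_square power3_eq_cube)
  ultimately have "s^2 < sin x ^ 2" by simp
  then show ?thesis
    using power_less_imp_less_base[of s 2 "sin x"] \<open>0 < sin x\<close> unfolding s_def by simp
qed

lemma rho_pow_lt_sin_between_etas:
  assumes "4 \<le> k" and "eta (k + 1) \<le> \<eta>" and "\<eta> < eta k"
  shows "rho \<eta> ^ (k - 2) < sin \<eta>"
proof (cases "k = 4")
  case True
  note bounds = between_etas[OF assms, unfolded True]
  then have "pi / 6 < \<eta>" using pi_gt_zero by (simp add: field_simps)
  moreover have "0 < Phi 4 \<eta>" using Phi_pos_before_eta[of 4 \<eta>] bounds assms(3) True by simp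
  ultimately show ?thesis using rho_sq_lt_sin bounds True by simp
next
  case False
  then have "5 \<le> k" using assms(1) by simp
  moreover have "\<eta> \<le> pi / 4"
    using between_etas(2)[OF assms] pi_div_pred_le_pi_div_4[OF \<open>5 \<le> k\<close>] by linarith
  ultimately show ?thesis using rho_pow_lt_sin between_etas(1)[OF assms] by blast
qed

theorem lemma6p2:
  fixes k :: nat and \<eta> :: real
  assumes "k \<ge> 4" and "eta (k + 1) \<le> \<eta>" and "\<eta> < eta k"
  shows "angle3 (zz \<eta> (k - 1)) (zz \<eta> k) (ww \<eta> 1) \<in> {0<..<pi}
       \<and> angle3 (zz \<eta> k) (ww \<eta> 1) (ww \<eta> 2) \<in> {0<..<pi}
       \<and> angle3 (ww \<eta> (k - 1)) (ww \<eta> k) (bb0 \<eta>) \<in> {0<..<pi}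
       \<and> angle3 (ww \<eta> k) (bb0 \<eta>) (zz \<eta> 0) \<in> {0<..<pi}"
proof -
  note bounds = between_etas[OF assms]
  have cos: "1/2 < cos \<eta>" using cos_gt_half bounds(3,4) by simp
  have Phi: "0 < Phi k \<eta>" using Phi_pos_before_eta assms(1,3) bounds(1) by simp
  have "rho \<eta> ^ (k - 2) * (- 1) \<le> rho \<eta> ^ (k - 2) * sin ((real k + 1) * \<eta>)"
    using rho_pos[of \<eta>] cos by (intro mult_left_mono) auto
  then have sin: "0 < sin \<eta> + rho \<eta> ^ (k - 2) * sin ((real k + 1) * \<eta>)"
    using rho_pow_lt_sin_between_etas[OF assms] by linarith
  obtain n where k: "k = Suc n" using assms(1) by (cases k) auto
  show ?thesis
    using angle_at_zz_iff[OF cos, of n] angle_at_ww1_iff[OF cos, of k] Phi sin assms(1)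
      angle_at_ww_eq_angle_at_zz[of \<eta> n] angle_at_bb0_eq_angle_at_ww1[OF cos, of k] cos
    by (simp add: k)
qed

end
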